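(* Let $m\ge5$ be odd, $h=\frac{m-1}{2}$, and $A=\{1,2,\dots,2^{h-1}-1\}$. For any $i,j\in A$ with $j$ odd, $$C_{i+2^h}\cap C_j=\begin{cases}C_j,&\text{if }(i,j)=(2^s i_1,\ i_1+2^{h-s})\text{ for some odd } i_1\in\{1,\dots,2^{h-1-s}-1\}\text{ and } s\in\{2,3,\dots,h-2\},\\ \emptyset,&\text{otherwise.}\end{cases}$$
   Context: Let $v=2^m-1$. For an integer $i$, $C_i=\{i\cdot 2^s \bmod v: s\ge 0\}$ is the $2$-cyclotomic coset of $i$ modulo $v$. *)

theory Defs
  imports Main
begin

definition cyc_coset :: "nat \<Rightarrow> nat \<Rightarrow> nat set" where
  "cyc_coset m i = {(i * 2 ^ s) mod (2 ^ m - 1) | s. True}"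

end

theory Submission
  imports Defs
begin

text \<open>Since $2^m \equiv 1 \pmod{2^m-1}$, cyclotomic cosets are orbits of the rotation of
  $m$-bit words, so two cosets are equal or disjoint; hence the intersection is either
  $C_j$ or empty, according as $i + 2^h \in C_j$. Rotating the odd word $j < 2^{h-1}$ by
  $t$ either produces the plain shift $j 2^t$ or wraps around, and a wrapped rotation
  carries the lowest bit of $j$ to a position $t \ge h+3$, far above $i + 2^h < 2^{h+1}$.
  So $i + 2^h \in C_j$ iff $j 2^s = i + 2^h$ for some $s$, and comparing the two sides
  gives $2 \le s \le h-2$ and $i = 2^s (j - 2^{h-s})$.\<close>

lemma pow2_mod_mersenne: "(2::nat) ^ m mod (2 ^ m - 1) = 1 mod (2 ^ m - 1)"
proof -
  have "(2::nat) ^ m = (2 ^ m - 1) + 1" by simp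
  then show ?thesis by (metis mod_add_self1)
qed

lemma mult_pow2_mod_mersenne_period:
  "(a * 2 ^ s) mod (2 ^ m - 1) = (a * 2 ^ (s mod m)) mod ((2::nat) ^ m - 1)"
proof -
  let ?v = "(2::nat) ^ m - 1"
  have "(2::nat) ^ s = 2 ^ (s mod m) * (2 ^ m) ^ (s div m)"
    by (metis mod_mult_div_eq power_add power_mult)
  then have "(a * 2 ^ s) mod ?v = (a * 2 ^ (s mod m) * (2 ^ m) ^ (s div m)) mod ?v"
    by (simp add: mult.assoc)
  also have "\<dots> = (a * 2 ^ (s mod m) * ((2 ^ m) ^ (s div m) mod ?v)) mod ?v"
    by (rule mod_mult_right_eq[symmetric])
  also have "((2::nat) ^ m) ^ (s div m) mod ?v = 1 mod ?v"
    by (metis pow2_mod_mersenne power_mod power_one)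
  finally show ?thesis by (simp add: mod_mult_right_eq)
qed

lemma mult_pow2_mod_mersenne_cong:
  assumes "s mod m = t mod m"
  shows "(a * 2 ^ s) mod (2 ^ m - 1) = (a * 2 ^ t) mod ((2::nat) ^ m - 1)"
  using assms mult_pow2_mod_mersenne_period by metis

lemma mod_mult_pow2_mod:
  "((a * 2 ^ s) mod v * 2 ^ t) mod v = (a * 2 ^ (s + t)) mod (v::nat)"
  by (metis mod_mult_left_eq power_add mult.assoc)

lemma mod_in_cyc_coset: "a mod (2 ^ m - 1) \<in> cyc_coset m a"
  unfolding cyc_coset_def by (rule CollectI, rule exI[of _ 0]) simp

lemma cyc_coset_eq_of_mem:
  assumes "0 < m" and "x \<in> cyc_coset m a"
  shows "cyc_coset m x = cyc_coset m a"
proof -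
  let ?v = "(2::nat) ^ m - 1"
  obtain s where x: "x = (a * 2 ^ s) mod ?v"
    using assms(2) unfolding cyc_coset_def by blast
  have "cyc_coset m x \<subseteq> cyc_coset m a"
    unfolding cyc_coset_def x mod_mult_pow2_mod by blast
  moreover have "cyc_coset m a \<subseteq> cyc_coset m x"
  proof
    fix y assume "y \<in> cyc_coset m a"
    then obtain u where y: "y = (a * 2 ^ u) mod ?v" unfolding cyc_coset_def by blast
    \<comment> \<open>rotating $x$ by $m - (s \bmod m)$ undoes the rotation that produced it\<close>
    define k where "k = m - s mod m"
    have "s mod m < m" using assms(1) by simp
    moreover have "m * (s div m) + s mod m = s" by (rule mult_div_mod_eq)
    ultimately have "s + (k + u) = u + m * Suc (s div m)"
      unfolding k_def mult_Suc_right by linarith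
    then have "(s + (k + u)) mod m = u mod m" by (simp only: mod_mult_self2)
    then have "y = (x * 2 ^ (k + u)) mod ?v"
      unfolding y x mod_mult_pow2_mod by (rule mult_pow2_mod_mersenne_cong[symmetric])
    then show "y \<in> cyc_coset m x" unfolding cyc_coset_def by blast
  qed
  ultimately show ?thesis by blast
qed

lemma cyc_coset_inter:
  assumes "0 < m"
  shows "cyc_coset m a \<inter> cyc_coset m b =
    (if a mod (2 ^ m - 1) \<in> cyc_coset m b then cyc_coset m b else {})"
proof (cases "a mod (2 ^ m - 1) \<in> cyc_coset m b")
  case True
  have "cyc_coset m a = cyc_coset m (a mod (2 ^ m - 1))"
    using cyc_coset_eq_of_mem[OF assms mod_in_cyc_coset] by simp
  also have "\<dots> = cyc_coset m b" using cyc_coset_eq_of_mem[OF assms True] .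
  finally show ?thesis using True by simp
next
  case False
  have "cyc_coset m a \<noteq> cyc_coset m b" using False mod_in_cyc_coset by metis
  then have "cyc_coset m a \<inter> cyc_coset m b = {}"
    using cyc_coset_eq_of_mem[OF assms] by blast
  with False show ?thesis by simp
qed

lemma mult_pow2_mod_mersenne_rotate:
  assumes "t \<le> m"
  shows "(j * 2 ^ t) mod (2 ^ m - 1) =
    (j div 2 ^ (m - t) + j mod 2 ^ (m - t) * 2 ^ t) mod ((2::nat) ^ m - 1)"
proof -
  let ?v = "(2::nat) ^ m - 1" and ?q = "(2::nat) ^ (m - t)"
  have q: "?q * 2 ^ t = 2 ^ m" using assms by (simp flip: power_add)
  have "j * 2 ^ t = (j div ?q * ?q + j mod ?q) * 2 ^ t" by (simp only: div_mult_mod_eq)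
  also have "\<dots> = j div ?q * 2 ^ m + j mod ?q * 2 ^ t"
    by (simp only: distrib_right mult.assoc q)
  finally have "(j * 2 ^ t) mod ?v = ((j div ?q * 2 ^ m) mod ?v + j mod ?q * 2 ^ t) mod ?v"
    by (simp only: mod_add_left_eq)
  also have "(j div ?q * 2 ^ m) mod ?v = (j div ?q) mod ?v"
    by (metis mod_mult_right_eq pow2_mod_mersenne mult_1_right)
  finally show ?thesis by (simp only: mod_add_left_eq)
qed

lemma mult_pow2_mod_mersenne_wrapped_ge:
  assumes j: "odd j" "j < 2 ^ k" and km: "2 * k \<le> m"
    and t: "t < m" and wrap: "2 ^ m \<le> j * 2 ^ t"
  shows "2 ^ (m - k + 1) \<le> (j * 2 ^ t) mod ((2::nat) ^ m - 1)"
proof -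
  let ?v = "(2::nat) ^ m - 1"
  define q where "q = (2::nat) ^ (m - t)"
  have q2t: "q * 2 ^ t = 2 ^ m" using t unfolding q_def by (simp flip: power_add)
  have "q \<le> j"
  proof (rule ccontr)
    assume "\<not> q \<le> j"
    then have "j * 2 ^ t < q * 2 ^ t" by simp
    with wrap q2t show False by simp
  qed
  then have "(2::nat) ^ (m - t) < 2 ^ k" using j(2) unfolding q_def by linarith
  then have "m - t < k" using power_less_imp_less_exp[of 2] by simp
  then have tk: "m - k + 1 \<le> t" using km by linarith
  \<comment> \<open>the wrapped rotation keeps the odd low part of $j$ at position $t$\<close>
  have "odd (j mod q)"
    using even_mod_exp_div_exp_iff[of j "m - t" 0] j(1) t unfolding q_def by simp
  then have "1 \<le> j mod q" by (cases "j mod q") auto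
  have "j mod q < q" unfolding q_def by simp
  then have "j mod q * 2 ^ t + 2 ^ t \<le> (2::nat) ^ m"
    using q2t by (metis Suc_leI add.commute mult_Suc mult_le_mono1)
  moreover have "j div q + 1 < (2::nat) ^ t"
  proof -
    have "j div q \<le> j" by simp
    then have "j div q + 1 \<le> 2 ^ k" using j(2) by linarith
    also have "(2::nat) ^ k \<le> 2 ^ (m - k)" using km by (simp add: power_increasing)
    also have "\<dots> < 2 ^ t" using tk by (simp add: power_strict_increasing)
    finally show ?thesis .
  qed
  ultimately have "j div q + j mod q * 2 ^ t < ?v" by linarith
  then have "(j * 2 ^ t) mod ?v = j div q + j mod q * 2 ^ t"
    using mult_pow2_mod_mersenne_rotate[of t m j] t unfolding q_def by simp
  moreover have "(2::nat) ^ t \<le> j mod q * 2 ^ t" using \<open>1 \<le> j mod q\<close> by simp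
  moreover have "(2::nat) ^ (m - k + 1) \<le> 2 ^ t"
    using tk power_increasing[of "m - k + 1" t "2::nat"] by simp
  ultimately show ?thesis by linarith
qed

lemma small_mem_cyc_coset_iff_shift:
  assumes j: "odd j" "j < 2 ^ k" and km: "2 * k \<le> m"
    and x: "0 < x" "x < 2 ^ (m - k + 1)" "x < 2 ^ m - 1"
  shows "x \<in> cyc_coset m j \<longleftrightarrow> (\<exists>s. j * 2 ^ s = x)"
proof
  let ?v = "(2::nat) ^ m - 1"
  assume "x \<in> cyc_coset m j"
  then obtain s where "x = (j * 2 ^ s) mod ?v" unfolding cyc_coset_def by blast
  have "0 < k" using j by (cases k) auto
  with km have "0 < m" by simp
  define t where "t = s mod m"
  have t: "t < m" unfolding t_def using \<open>0 < m\<close> by simp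
  have xt: "x = (j * 2 ^ t) mod ?v"
    using \<open>x = _\<close> mult_pow2_mod_mersenne_period unfolding t_def by metis
  have "j * 2 ^ t < 2 ^ m"
    using mult_pow2_mod_mersenne_wrapped_ge[OF j km t] xt x(2) by (meson not_le)
  moreover have "j * 2 ^ t \<noteq> ?v" using xt x(1) by auto
  ultimately have "j * 2 ^ t = x" using xt by simp
  then show "\<exists>s. j * 2 ^ s = x" by blast
next
  assume "\<exists>s. j * 2 ^ s = x"
  then obtain s where "j * 2 ^ s = x" by blast
  then have "x = (j * 2 ^ s) mod (2 ^ m - 1)" using x(3) by simp
  then show "x \<in> cyc_coset m j" unfolding cyc_coset_def by blast
qed

lemma odd_shift_eq_add_pow2_exponent_bounds:
  fixes h i j s :: nat
  assumes eq: "j * 2 ^ s = i + 2 ^ h" and "0 < i" "i < 2 ^ (h - 1)"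
    and "odd j" "j < 2 ^ (h - 1)"
  shows "2 \<le> s" and "s \<le> h - 2"
proof -
  have "h = Suc (h - 1)" using assms by (cases h) auto
  then have hh: "(2::nat) ^ h = 2 * 2 ^ (h - 1)" by (metis power_Suc)
  show "2 \<le> s"
  proof (rule ccontr)
    assume "\<not> 2 \<le> s"
    then have "(2::nat) ^ s \<le> 2" using power_increasing[of s 1 "2::nat"] by simp
    then have "j * 2 ^ s \<le> j * 2" by simp
    then show False using eq hh \<open>j < 2 ^ (h - 1)\<close> by linarith
  qed
  show "s \<le> h - 2"
  proof (rule ccontr)
    assume "\<not> s \<le> h - 2"
    then have "(2::nat) ^ (h - 1) \<le> 2 ^ s" by (simp add: power_increasing)
    show False
    proof (cases "j = 1")
      case True
      have s_eq: "2 ^ s = i + 2 ^ h" using eq True by simp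
      have lo: "(2::nat) ^ h < 2 ^ s" using s_eq \<open>0 < i\<close> by linarith
      have hi: "(2::nat) ^ s < 2 ^ Suc h"
        unfolding power_Suc using s_eq \<open>i < 2 ^ (h - 1)\<close> hh by linarith
      have "h < s" using power_less_imp_less_exp[OF _ lo] by simp
      moreover have "s < Suc h" using power_less_imp_less_exp[OF _ hi] by simp
      ultimately show False by simp
    next
      case False
      then have "3 \<le> j" using \<open>odd j\<close> by presburger
      then have "3 * 2 ^ (h - 1) \<le> j * (2::nat) ^ s"
        using \<open>2 ^ (h - 1) \<le> 2 ^ s\<close> by (intro mult_le_mono) auto
      then show False using eq assms hh by linarith
    qed
  qed
qed

lemma odd_shift_eq_add_pow2_iff:
  fixes h i j :: nat
  assumes i: "0 < i" "i < 2 ^ (h - 1)" and j: "odd j" "j < 2 ^ (h - 1)"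
  shows "(\<exists>s. j * 2 ^ s = i + 2 ^ h) \<longleftrightarrow>
    (\<exists>i1 s. odd i1 \<and> i1 \<in> {1..2 ^ (h - 1 - s) - 1} \<and> s \<in> {2..h - 2}
             \<and> i = 2 ^ s * i1 \<and> j = i1 + 2 ^ (h - s))"
proof
  assume "\<exists>s. j * 2 ^ s = i + 2 ^ h"
  then obtain s where eq: "j * 2 ^ s = i + 2 ^ h" by blast
  note s = odd_shift_eq_add_pow2_exponent_bounds[OF eq i j]
  have pw: "(2::nat) ^ s * 2 ^ (h - s) = 2 ^ h"
    and pw1: "(2::nat) ^ s * 2 ^ (h - 1 - s) = 2 ^ (h - 1)"
    using s(2) by (simp_all flip: power_add)
  define i1 where "i1 = j - 2 ^ (h - s)"
  have "2 ^ s * 2 ^ (h - s) < j * (2::nat) ^ s" using pw eq i by simp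
  then have jgt: "2 ^ (h - s) < j" by simp
  have i_eq: "i = 2 ^ s * i1"
    using eq pw jgt unfolding i1_def by (simp add: algebra_simps diff_mult_distrib2)
  have "even ((2::nat) ^ (h - s))" using s by simp
  then have "odd i1" using j(1) jgt unfolding i1_def by simp
  moreover have "2 ^ s * i1 < (2::nat) ^ s * 2 ^ (h - 1 - s)" using i_eq i pw1 by simp
  then have "i1 \<in> {1..2 ^ (h - 1 - s) - 1}" using jgt unfolding i1_def by auto
  moreover have "j = i1 + 2 ^ (h - s)" using jgt unfolding i1_def by simp
  ultimately show "\<exists>i1 s. odd i1 \<and> i1 \<in> {1..2 ^ (h - 1 - s) - 1} \<and> s \<in> {2..h - 2}
             \<and> i = 2 ^ s * i1 \<and> j = i1 + 2 ^ (h - s)"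
    using i_eq s by auto
next
  assume "\<exists>i1 s. odd i1 \<and> i1 \<in> {1..2 ^ (h - 1 - s) - 1} \<and> s \<in> {2..h - 2}
             \<and> i = 2 ^ s * i1 \<and> j = i1 + 2 ^ (h - s)"
  then obtain i1 s where "s \<in> {2..h - 2}" "i = 2 ^ s * i1" "j = i1 + 2 ^ (h - s)" by blast
  moreover from \<open>s \<in> {2..h - 2}\<close> have "s \<le> h"
    by (simp only: atLeastAtMost_iff) linarith
  moreover from this have "(2::nat) ^ s * 2 ^ (h - s) = 2 ^ h" by (simp flip: power_add)
  ultimately have "j * 2 ^ s = i + 2 ^ h" by (simp add: algebra_simps)
  then show "\<exists>s. j * 2 ^ s = i + 2 ^ h" by blast
qed

theorem lemma7:
  fixes m h i j :: nat
  assumes "odd m" and "m \<ge> 5"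
    and "h = (m - 1) div 2"
    and "i \<in> {1..2 ^ (h - 1) - 1}" and "j \<in> {1..2 ^ (h - 1) - 1}"
    and "odd j"
  shows "cyc_coset m (i + 2 ^ h) \<inter> cyc_coset m j =
    (if (\<exists>i1 s. odd i1 \<and> i1 \<in> {1..2 ^ (h - 1 - s) - 1} \<and> s \<in> {2..h - 2}
                 \<and> i = 2 ^ s * i1 \<and> j = i1 + 2 ^ (h - s))
     then cyc_coset m j else {})"
proof -
  have m: "m = 2 * h + 1" "2 \<le> h" using assms(1-3) by (auto elim: oddE)
  have "(0::nat) < 2 ^ (h - 1)" by simp
  then have i: "0 < i" "i < 2 ^ (h - 1)" and j: "j < 2 ^ (h - 1)"
    using assms(4,5) by auto
  have "h = Suc (h - 1)" using m(2) by simp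
  then have "(2::nat) ^ h = 2 * 2 ^ (h - 1)" by (metis power_Suc)
  moreover have "(2::nat) ^ Suc h \<le> 2 ^ m"
    using m power_increasing[of "Suc h" m "2::nat"] by simp
  moreover have "(2::nat) ^ Suc h < 2 ^ (m - (h - 1) + 1)"
    using m power_strict_increasing[of "Suc h" "h + 3" "2::nat"] by simp
  ultimately have small: "i + 2 ^ h < 2 ^ m - 1" "i + 2 ^ h < 2 ^ (m - (h - 1) + 1)"
    using i by simp_all
  moreover have "2 * (h - 1) \<le> m" using m by linarith
  ultimately show ?thesis
    using cyc_coset_inter[of m "i + 2 ^ h" j] small_mem_cyc_coset_iff_shift[OF assms(6) j]
      odd_shift_eq_add_pow2_iff[OF i assms(6) j] m by simp
qed

end
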